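(* Suppose $\mathsf{N}=(\mathsf{M}-1)\mathsf{T}+1$ and consider the coding scheme described in the context. For each $k=0,1,\dots,\mathsf{M}-1$ there exists a function $f_k:\mathbb{R}^{\mathsf{N}}\to\mathbb{R}$ (which may depend on $n$) such that $$\lim_{n\to\infty} f_k\big(\tilde V^{(1)},\dots,\tilde V^{(\mathsf{N})}\big)=D_k$$ for every realization of the random variables, where $\tilde V^{(j)}$ depends on $n$ through $\zeta_1(n),\zeta_2(n)$.
   Context: Let $\mathsf{M},\mathsf{T}$ be positive integers, $\eta>0$, $\sigma^2>0$. Real inputs $A_1,\dots,A_{\mathsf{M}}$. For each $i\in[\mathsf{M}]$ let $R_i$ (with variance $\sigma^2$) and $S_{i,1},\dots,S_{i,\mathsf{T}-1}$ be zero-mean random variables, all of them mutually independent and independent of the inputs. Let $\zeta_1(n),\zeta_2(n)$ be strictly positive sequences with $\lim_{n\to\infty}\zeta_1(n)/\zeta_2(n)=\lim_{n\to\infty}\zeta_2(n)=0$ and, when $\mathsf{T}\ge2$, $\lim_{n\to\infty}\zeta_2(n)^{\mathsf{T}/(\mathsf{T}-1)}/\zeta_1(n)=0$. Encoding polynomials: if $\mathsf{T}\ge2$, $p_i(x)=(A_i+R_i)+\zeta_2(n)\sum_{t=1}^{\mathsf{T}-1}S_{i,t}x^t+\zeta_1(n)R_ix^{\mathsf{T}}$; if $\mathsf{T}=1$, $p_i(x)=(A_i+R_i)+\zeta_1(n)R_ix$. Fix distinct reals $x_1,\dots,x_{\mathsf{N}}$; node $j$ outputs $\tilde V^{(j)}=\prod_{i=1}^{\mathsf{M}}p_i(x_j)$.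 Let $\alpha=\eta/(\sigma^2+\eta)$ and $Z_i=\alpha(A_i+R_i)-A_i$ (equivalently $Z_i=-\frac{\sigma^2}{\sigma^2+\eta}A_i+\frac{\eta}{\sigma^2+\eta}R_i$). For $k=0,\dots,\mathsf{M}-1$, $D_k=\sum_{\mathcal{S}\subseteq[\mathsf{M}],|\mathcal{S}|=k}\big(\prod_{i\in\mathcal{S}}A_i\big)\big(\prod_{l\notin\mathcal{S}}(A_l+Z_l)\big)$. *)

theory Defs
  imports Complex_Main
begin

text \<open>Encoding polynomial p_i evaluated at x, for a fixed n (through z1 = zeta_1(n), z2 = zeta_2(n)).
  Indices i in {1..M}, t in {1..T-1}.\<close>
definition enc_poly ::
  "nat \<Rightarrow> real \<Rightarrow> real \<Rightarrow> real \<Rightarrow> real \<Rightarrow> (nat \<Rightarrow> real) \<Rightarrow> real \<Rightarrow> real" where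
  "enc_poly T z1 z2 a r s x =
     (if T \<ge> 2 then (a + r) + z2 * (\<Sum>t=1..T-1. s t * x ^ t) + z1 * r * x ^ T
      else (a + r) + z1 * r * x)"

definition node_output ::
  "nat \<Rightarrow> nat \<Rightarrow> real \<Rightarrow> real \<Rightarrow> (nat \<Rightarrow> real) \<Rightarrow> (nat \<Rightarrow> real) \<Rightarrow> (nat \<Rightarrow> nat \<Rightarrow> real)
     \<Rightarrow> real \<Rightarrow> real" where
  "node_output M T z1 z2 A R S xj = (\<Prod>i=1..M. enc_poly T z1 z2 (A i) (R i) (S i) xj)"

definition Zvar :: "real \<Rightarrow> real \<Rightarrow> real \<Rightarrow> real \<Rightarrow> real" where
  "Zvar \<eta> \<sigma>2 a r = (\<eta> / (\<sigma>2 + \<eta>)) * (a + r) - a"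

definition Dk :: "nat \<Rightarrow> real \<Rightarrow> real \<Rightarrow> (nat \<Rightarrow> real) \<Rightarrow> (nat \<Rightarrow> real) \<Rightarrow> nat \<Rightarrow> real" where
  "Dk M \<eta> \<sigma>2 A R k =
     (\<Sum>S\<in>{S. S \<subseteq> {1..M} \<and> card S = k}.
        (\<Prod>i\<in>S. A i) * (\<Prod>l\<in>{1..M} - S. A l + Zvar \<eta> \<sigma>2 (A l) (R l)))"

end

theory Submission
  imports Defs "HOL-Computational_Algebra.Polynomial"
begin

(* Put u = zeta_1^(1/T). Node j evaluates at u x_j the polynomial Q = prod_i q_i with
   q_i(y) = (A_i + R_i) + sum_t zeta_2 S_(i,t) u^(-t) y^t + R_i y^T. The growth condition on
   zeta_2 kills the middle coefficients, so Q tends coefficientwise to prod_i (R_i y^T + A_i + R_i),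
   whose coefficient of y^(jT) is the mixed elementary symmetric function e_j(R; A + R).
   Lagrange weights on the N = (M - 1) T + 1 nodes annihilate the monomials of degree below jT and
   extract y^(jT); after division by u^(jT) = zeta_1^j every higher term carries a positive power
   of u and vanishes. Finally A + Z = alpha (A + R), and expanding A_i = (A_i + R_i) - R_i turns D_k
   into alpha^(M-k) sum_(j<=k) (-1)^j C(M-j, k-j) e_j(R; A + R). *)

definition lagrange_basis :: "'i set \<Rightarrow> ('i \<Rightarrow> 'a::field) \<Rightarrow> 'i \<Rightarrow> 'a poly" where
  "lagrange_basis I x j =
     smult (inverse (\<Prod>i\<in>I - {j}. x j - x i)) (\<Prod>i\<in>I - {j}. [:- x i, 1:])"

lemma poly_lagrange_basis:
  assumes "finite I" "inj_on x I" "j \<in> I" "l \<in> I"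
  shows "poly (lagrange_basis I x j) (x l) = (if l = j then 1 else 0)"
proof -
  have eval: "poly (lagrange_basis I x j) y = (\<Prod>i\<in>I - {j}. y - x i) / (\<Prod>i\<in>I - {j}. x j - x i)" for y
    by (simp add: lagrange_basis_def poly_prod field_simps)
  show ?thesis
  proof (cases "l = j")
    case True
    have "x j \<noteq> x i" if "i \<in> I - {j}" for i
      using assms that by (auto simp: inj_on_def)
    then have "(\<Prod>i\<in>I - {j}. x j - x i) \<noteq> 0"
      using assms(1) by simp
    then show ?thesis using True by (simp add: eval)
  next
    case False
    then have "(\<Prod>i\<in>I - {j}. x l - x i) = 0"
      using assms by (intro prod_zero) auto
    then show ?thesis using False by (simp add: eval)
  qed
qed

lemma degree_lagrange_basis:
  assumes "finite I" "j \<in> I"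
  shows "degree (lagrange_basis I x j) \<le> card I - 1"
proof -
  have "degree (lagrange_basis I x j) \<le> (\<Sum>i\<in>I - {j}. degree [:- x i, 1:])"
    unfolding lagrange_basis_def
    by (rule order.trans[OF degree_smult_le])
       (use degree_prod_sum_le[of "I - {j}" "\<lambda>i. [:- x i, 1:]"] assms in \<open>simp add: o_def\<close>)
  also have "\<dots> = card I - 1" using assms by simp
  finally show ?thesis .
qed

lemma lagrange_interpolation:
  fixes p :: "'a::field poly"
  assumes "finite I" "inj_on x I" "degree p < card I"
  shows "p = (\<Sum>j\<in>I. smult (poly p (x j)) (lagrange_basis I x j))"
proof (rule poly_eqI_degree[where A = "x ` I"])
  fix y assume "y \<in> x ` I"
  then obtain l where l: "l \<in> I" "y = x l" by blast
  have "poly (\<Sum>j\<in>I. smult (poly p (x j)) (lagrange_basis I x j)) (x l) =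
        (\<Sum>j\<in>I. if j = l then poly p (x j) else 0)"
    unfolding poly_sum poly_smult using assms l by (intro sum.cong refl) (auto simp: poly_lagrange_basis)
  then show "poly p y = poly (\<Sum>j\<in>I. smult (poly p (x j)) (lagrange_basis I x j)) y"
    using assms l by simp
next
  have "degree (\<Sum>j\<in>I. smult (poly p (x j)) (lagrange_basis I x j)) \<le> card I - 1"
    by (intro degree_sum_le order.trans[OF degree_smult_le] degree_lagrange_basis assms(1))
  then show "degree (\<Sum>j\<in>I. smult (poly p (x j)) (lagrange_basis I x j)) < card (x ` I)"
    using assms by (simp add: card_image)
qed (use assms in \<open>simp_all add: card_image\<close>)

lemma sum_coeff_lagrange_basis_mult_power:
  fixes x :: "'i \<Rightarrow> 'a::field"
  assumes "finite I" "inj_on x I" "d < card I"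
  shows "(\<Sum>l\<in>I. coeff (lagrange_basis I x l) m * x l ^ d) = (if d = m then 1 else 0)"
proof -
  have "monom 1 d = (\<Sum>l\<in>I. smult (x l ^ d) (lagrange_basis I x l))"
    using lagrange_interpolation[of I x "monom 1 d"] assms by (simp add: degree_monom_eq poly_monom)
  then have "coeff (monom 1 d) m = (\<Sum>l\<in>I. x l ^ d * coeff (lagrange_basis I x l) m)"
    by (simp add: coeff_sum)
  then show ?thesis by (simp add: mult.commute)
qed

definition mixed_esym :: "'i set \<Rightarrow> ('i \<Rightarrow> 'a::comm_semiring_1) \<Rightarrow> ('i \<Rightarrow> 'a) \<Rightarrow> nat \<Rightarrow> 'a" where
  "mixed_esym I a b j = (\<Sum>U\<in>{U. U \<subseteq> I \<and> card U = j}. (\<Prod>i\<in>U. a i) * (\<Prod>i\<in>I - U. b i))"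

lemma prod_smult_add_smult:
  fixes p q :: "'a::comm_semiring_1 poly"
  assumes "finite I"
  shows "(\<Prod>i\<in>I. smult (a i) p + smult (b i) q) =
         (\<Sum>j\<le>card I. smult (mixed_esym I a b j) (p ^ j * q ^ (card I - j)))"
proof -
  have "(\<Prod>i\<in>I. smult (a i) p + smult (b i) q) =
        (\<Sum>U\<in>Pow I. smult ((\<Prod>i\<in>U. a i) * (\<Prod>i\<in>I - U. b i)) (p ^ card U * q ^ (card I - card U)))"
    unfolding prod_add[OF assms] prod_smult
    using assms by (intro sum.cong refl) (auto simp: card_Diff_subset finite_subset mult_ac)
  also have "\<dots> = (\<Sum>j\<le>card I. \<Sum>U\<in>{U \<in> Pow I. card U = j}.
                     smult ((\<Prod>i\<in>U. a i) * (\<Prod>i\<in>I - U. b i)) (p ^ j * q ^ (card I - j)))"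
    using assms by (subst sum.group[symmetric, where g = card and T = "{..card I}"])
      (auto intro: card_mono intro!: sum.cong)
  also have "\<dots> = (\<Sum>j\<le>card I. smult (mixed_esym I a b j) (p ^ j * q ^ (card I - j)))"
    unfolding mixed_esym_def smult_sum by (intro sum.cong) auto
  finally show ?thesis .
qed

lemma coeff_prod_monom_add_const:
  fixes a b :: "'i \<Rightarrow> 'a::comm_semiring_1"
  assumes "finite I" "T > 0" "j \<le> card I"
  shows "coeff (\<Prod>i\<in>I. monom (a i) T + [:b i:]) (j * T) = mixed_esym I a b j"
proof -
  have "(\<Prod>i\<in>I. monom (a i) T + [:b i:]) = (\<Prod>i\<in>I. smult (a i) (monom 1 T) + smult (b i) 1)"
    by (simp add: smult_monom)
  also have "\<dots> = (\<Sum>j'\<le>card I. smult (mixed_esym I a b j') (monom 1 (T * j')))"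
    unfolding prod_smult_add_smult[OF assms(1)] by (simp add: monom_power)
  finally have "coeff (\<Prod>i\<in>I. monom (a i) T + [:b i:]) (j * T) =
      (\<Sum>j'\<le>card I. coeff (smult (mixed_esym I a b j') (monom 1 (T * j'))) (j * T))"
    by (simp add: coeff_sum)
  also have "\<dots> = (\<Sum>j'\<le>card I. if j' = j then mixed_esym I a b j' else 0)"
    using assms(2) by (intro sum.cong refl) (auto simp: coeff_monom)
  finally show ?thesis using assms(3) by simp
qed

lemma mixed_esym_diff_right:
  fixes r b :: "'i \<Rightarrow> 'a::comm_ring_1"
  assumes "finite I" "k \<le> card I"
  shows "mixed_esym I (\<lambda>i. b i - r i) b k =
         (\<Sum>j\<le>k. (-1) ^ j * of_nat ((card I - j) choose (k - j)) * mixed_esym I r b j)"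
proof -
  have "(\<Prod>i\<in>I. monom (b i - r i) 1 + [:b i:]) =
        (\<Prod>i\<in>I. smult (r i) (monom (-1) 1) + smult (b i) [:1, 1:])"
    by (intro prod.cong refl) (simp add: monom_altdef algebra_simps)
  also have "\<dots> = (\<Sum>j\<le>card I. smult (mixed_esym I r b j) (monom ((-1) ^ j) j * [:1, 1:] ^ (card I - j)))"
    unfolding prod_smult_add_smult[OF assms(1)] monom_power by simp
  finally have "mixed_esym I (\<lambda>i. b i - r i) b k =
      (\<Sum>j\<le>card I. mixed_esym I r b j *
         (if k < j then 0 else (-1) ^ j * coeff ([:1, 1:] ^ (card I - j)) (k - j)))"
    using coeff_prod_monom_add_const[of I 1 k "\<lambda>i. b i - r i" b] assms
    by (simp add: coeff_sum coeff_monom_mult)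
  also have "\<dots> = (\<Sum>j\<le>card I. if k < j then 0
                      else (-1) ^ j * of_nat ((card I - j) choose (k - j)) * mixed_esym I r b j)"
    using assms(2) by (intro sum.cong refl) (simp add: coeff_linear_poly_power)
  also have "\<dots> = (\<Sum>j\<le>k. (-1) ^ j * of_nat ((card I - j) choose (k - j)) * mixed_esym I r b j)"
    using assms(2) by (intro sum.mono_neutral_cong_right) auto
  finally show ?thesis .
qed

lemma mixed_esym_scale_right:
  assumes "finite I" "k \<le> card I"
  shows "mixed_esym I a (\<lambda>i. c * b i) k = c ^ (card I - k) * mixed_esym I a b k"
  unfolding mixed_esym_def sum_distrib_left
  using assms by (intro sum.cong refl) (auto simp: prod.distrib card_Diff_subset finite_subset mult_ac)

lemma Dk_eq_alternating_mixed_esym: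
  assumes "k \<le> M"
  shows "Dk M \<eta> \<sigma>2 A R k = (\<eta> / (\<sigma>2 + \<eta>)) ^ (M - k) *
     (\<Sum>j\<le>k. (-1) ^ j * real ((M - j) choose (k - j)) * mixed_esym {1..M} R (\<lambda>i. A i + R i) j)"
proof -
  define \<alpha> where "\<alpha> = \<eta> / (\<sigma>2 + \<eta>)"
  have "Dk M \<eta> \<sigma>2 A R k = mixed_esym {1..M} (\<lambda>i. (A i + R i) - R i) (\<lambda>i. \<alpha> * (A i + R i)) k"
    by (simp add: Dk_def mixed_esym_def Zvar_def \<alpha>_def)
  also have "\<dots> = \<alpha> ^ (M - k) * mixed_esym {1..M} (\<lambda>i. (A i + R i) - R i) (\<lambda>i. A i + R i) k"
    using assms by (subst mixed_esym_scale_right) auto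
  also have "mixed_esym {1..M} (\<lambda>i. (A i + R i) - R i) (\<lambda>i. A i + R i) k =
      (\<Sum>j\<le>k. (-1) ^ j * real ((M - j) choose (k - j)) * mixed_esym {1..M} R (\<lambda>i. A i + R i) j)"
    using assms by (subst mixed_esym_diff_right) auto
  finally show ?thesis by (simp add: \<alpha>_def)
qed

lemma tendsto_coeff_prod:
  fixes P :: "'i \<Rightarrow> 'b \<Rightarrow> 'a::real_normed_field poly"
  assumes "finite I" "\<And>i d. i \<in> I \<Longrightarrow> ((\<lambda>n. coeff (P i n) d) \<longlongrightarrow> coeff (P' i) d) F"
  shows "((\<lambda>n. coeff (\<Prod>i\<in>I. P i n) d) \<longlongrightarrow> coeff (\<Prod>i\<in>I. P' i) d) F"
  using assms
proof (induction I arbitrary: d rule: finite_induct)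
  case (insert i I)
  then show ?case
    unfolding prod.insert[OF insert(1,2)] coeff_mult by (intro tendsto_sum tendsto_mult) auto
qed simp

lemma poly_altdef_degree_le:
  fixes p :: "'a::comm_semiring_1 poly"
  assumes "degree p \<le> D"
  shows "poly p y = (\<Sum>d\<le>D. coeff p d * y ^ d)"
  unfolding poly_altdef
  by (rule sum.mono_neutral_left) (use assms in \<open>auto simp: coeff_eq_0\<close>)

lemma tendsto_weighted_samples_coeff:
  fixes Q :: "'b \<Rightarrow> 'a::real_normed_field poly" and w x :: "'i \<Rightarrow> 'a"
  assumes dual: "\<And>d. d \<le> m \<Longrightarrow> (\<Sum>l\<in>I. w l * x l ^ d) = (if d = m then 1 else 0)"
    and deg: "\<And>n. degree (Q n) \<le> D"
    and conv: "\<And>d. ((\<lambda>n. coeff (Q n) d) \<longlongrightarrow> coeff P d) F"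
    and u: "(u \<longlongrightarrow> 0) F" "\<And>n. u n \<noteq> 0"
  shows "((\<lambda>n. (\<Sum>l\<in>I. w l * poly (Q n) (u n * x l)) / u n ^ m) \<longlongrightarrow> coeff P m) F"
proof -
  define c where "c d = (\<Sum>l\<in>I. w l * x l ^ d)" for d
  have expand: "(\<Sum>l\<in>I. w l * poly (Q n) (u n * x l)) / u n ^ m =
      (\<Sum>d\<le>D + m. coeff (Q n) d * c d * (u n ^ d / u n ^ m))" for n
    using deg[of n]
    by (simp add: poly_altdef_degree_le[of _ "D + m"] c_def sum_distrib_left sum_distrib_right
        sum_divide_distrib power_mult_distrib mult_ac sum.swap[of _ I])
  have term_limit: "((\<lambda>n. coeff (Q n) d * c d * (u n ^ d / u n ^ m))
                       \<longlongrightarrow> (if d = m then coeff P m else 0)) F" for d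
  proof (cases d m rule: linorder_cases)
    case less
    then show ?thesis using dual[of d] by (simp add: c_def)
  next
    case equal
    then show ?thesis using dual[of m] conv[of m] u(2) by (simp add: c_def)
  next
    case greater
    then have "u n ^ d / u n ^ m = u n ^ (d - m)" for n
      using u(2) by (simp add: power_diff)
    moreover have "((\<lambda>n. coeff (Q n) d * c d * u n ^ (d - m)) \<longlongrightarrow> coeff P d * c d * 0 ^ (d - m)) F"
      by (intro tendsto_intros conv u(1))
    ultimately show ?thesis using greater by (simp add: power_0_left)
  qed
  have "((\<lambda>n. \<Sum>d\<le>D + m. coeff (Q n) d * c d * (u n ^ d / u n ^ m)) \<longlongrightarrow>
          (\<Sum>d\<le>D + m. if d = m then coeff P m else 0)) F"
    by (intro tendsto_sum term_limit)
  then show ?thesis by (simp add: expand)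
qed

definition enc_poly_rescaled :: "nat \<Rightarrow> real \<Rightarrow> real \<Rightarrow> real \<Rightarrow> real \<Rightarrow> (nat \<Rightarrow> real) \<Rightarrow> real poly" where
  "enc_poly_rescaled T u z2 a r s =
     [:a + r:] + (\<Sum>t=1..T-1. monom (z2 * s t / u ^ t) t) + monom r T"

lemma enc_poly_eq_poly_rescaled:
  assumes "u \<noteq> 0" "u ^ T = z1" "T \<ge> 1"
  shows "enc_poly T z1 z2 a r s y = poly (enc_poly_rescaled T u z2 a r s) (u * y)"
proof -
  have "(\<Sum>t=1..T-1. z2 * s t / u ^ t * (u * y) ^ t) = z2 * (\<Sum>t=1..T-1. s t * y ^ t)"
    using assms(1) by (simp add: sum_distrib_left power_mult_distrib)
  moreover have "r * (u * y) ^ T = z1 * r * y ^ T"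
    using assms(2) by (simp add: power_mult_distrib)
  moreover have "T = 1" if "\<not> T \<ge> 2"
    using that assms(3) by simp
  ultimately show ?thesis
    by (auto simp: enc_poly_def enc_poly_rescaled_def poly_sum poly_monom)
qed

lemma degree_enc_poly_rescaled: "degree (enc_poly_rescaled T u z2 a r s) \<le> T"
  unfolding enc_poly_rescaled_def
  by (intro degree_add_le degree_sum_le order.trans[OF degree_monom_le]) auto

lemma tendsto_coeff_enc_poly_rescaled:
  assumes "\<And>t. 1 \<le> t \<Longrightarrow> t < T \<Longrightarrow> ((\<lambda>n. z2 n / u n ^ t) \<longlongrightarrow> 0) F"
  shows "((\<lambda>n. coeff (enc_poly_rescaled T (u n) (z2 n) a r s) d) \<longlongrightarrow> coeff (monom r T + [:a + r:]) d) F"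
proof -
  have "coeff (enc_poly_rescaled T (u n) (z2 n) a r s) d =
      coeff (monom r T + [:a + r:]) d + (if 1 \<le> d \<and> d < T then z2 n / u n ^ d * s d else 0)" for n
    by (auto simp: enc_poly_rescaled_def coeff_sum coeff_monom)
  moreover have "((\<lambda>n. if 1 \<le> d \<and> d < T then z2 n / u n ^ d * s d else 0) \<longlongrightarrow> 0) F"
  proof (cases "1 \<le> d \<and> d < T")
    case True
    then have "((\<lambda>n. z2 n / u n ^ d * s d) \<longlongrightarrow> 0) F"
      by (intro tendsto_mult_left_zero assms) auto
    then show ?thesis using True by simp
  next
    case False
    then show ?thesis by (subst if_not_P) simp_all
  qed
  ultimately show ?thesis
    using tendsto_add[OF tendsto_const] by fastforce
qed

lemma tendsto_ratio_root_power:
  fixes z1 z2 :: "'b \<Rightarrow> real"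
  assumes t: "1 \<le> t" "t < T"
    and pos: "\<And>n. z1 n > 0" "\<And>n. z2 n > 0"
    and ratio: "((\<lambda>n. z2 n powr (real T / (real T - 1)) / z1 n) \<longlongrightarrow> 0) F"
    and z1: "(z1 \<longlongrightarrow> 0) F"
  shows "((\<lambda>n. z2 n / (z1 n powr (1 / real T)) ^ t) \<longlongrightarrow> 0) F"
proof -
  define e where "e = (real T - 1) / real T"
  have e: "e > 0" using t by (simp add: e_def)
  have eq: "z2 n / (z1 n powr (1 / real T)) ^ t =
      (z2 n powr (real T / (real T - 1)) / z1 n) powr e * (z1 n powr (1 / real T)) ^ (T - 1 - t)" for n
  proof -
    have ratio_powr: "(z2 n powr (real T / (real T - 1)) / z1 n) powr e = z2 n / z1 n powr e"
      using pos[of n] t by (simp add: powr_divide powr_powr e_def)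
    have root_power: "(z1 n powr (1 / real T)) ^ m = z1 n powr (real m / real T)" for m
      using pos(1)[of n] by (simp add: powr_realpow[symmetric] powr_powr)
    have "real t / real T + real (T - 1 - t) / real T = e"
      using t by (simp add: e_def of_nat_diff field_simps)
    then have "z1 n powr e = (z1 n powr (1 / real T)) ^ t * (z1 n powr (1 / real T)) ^ (T - 1 - t)"
      by (simp add: root_power powr_add[symmetric])
    then show ?thesis
      using ratio_powr pos(1)[of n] by (simp add: field_simps)
  qed
  have "((\<lambda>n. (z2 n powr (real T / (real T - 1)) / z1 n) powr e * (z1 n powr (1 / real T)) ^ (T - 1 - t))
          \<longlongrightarrow> 0 * 0 ^ (T - 1 - t)) F"
  proof (intro tendsto_mult tendsto_power)
    show "((\<lambda>n. (z2 n powr (real T / (real T - 1)) / z1 n) powr e) \<longlongrightarrow> 0) F"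
      using ratio e pos(1)
      by (intro tendsto_zero_powrI always_eventually allI divide_nonneg_pos) (auto intro: less_imp_le)
    show "((\<lambda>n. z1 n powr (1 / real T)) \<longlongrightarrow> 0) F"
      using z1 t pos by (intro tendsto_zero_powrI) (auto intro: always_eventually less_imp_le)
  qed
  then show ?thesis by (simp add: eq)
qed

lemma tendsto_decoded_node_outputs:
  fixes \<zeta>1 \<zeta>2 :: "nat \<Rightarrow> real" and w x :: "'i \<Rightarrow> real"
  assumes T: "T \<ge> 1" and j: "j \<le> M"
    and pos: "\<And>n. \<zeta>1 n > 0" "\<And>n. \<zeta>2 n > 0"
    and \<zeta>1: "\<zeta>1 \<longlonglongrightarrow> 0"
    and ratio: "T \<ge> 2 \<Longrightarrow> (\<lambda>n. \<zeta>2 n powr (real T / (real T - 1)) / \<zeta>1 n) \<longlonglongrightarrow> 0"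
    and dual: "\<And>d. d \<le> j * T \<Longrightarrow> (\<Sum>l\<in>L. w l * x l ^ d) = (if d = j * T then 1 else 0)"
  shows "(\<lambda>n. (\<Sum>l\<in>L. w l * node_output M T (\<zeta>1 n) (\<zeta>2 n) A R S (x l)) / \<zeta>1 n ^ j)
           \<longlonglongrightarrow> mixed_esym {1..M} R (\<lambda>i. A i + R i) j"
proof -
  define u where "u n = \<zeta>1 n powr (1 / real T)" for n
  define Q where "Q n = (\<Prod>i=1..M. enc_poly_rescaled T (u n) (\<zeta>2 n) (A i) (R i) (S i))" for n
  have u_nz: "u n \<noteq> 0" for n
    using pos(1)[of n] by (simp add: u_def)
  have u_power: "u n ^ (j' * T) = \<zeta>1 n ^ j'" for n j'
    using pos(1)[of n] T
    by (simp add: u_def power_mult[of _ T] mult.commute[of j'] powr_realpow[symmetric] powr_powr)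
  have u: "u \<longlonglongrightarrow> 0"
    unfolding u_def[abs_def] using \<zeta>1 T pos(1)
    by (intro tendsto_zero_powrI) (auto intro: always_eventually less_imp_le)
  have node: "node_output M T (\<zeta>1 n) (\<zeta>2 n) A R S y = poly (Q n) (u n * y)" for n y
    using enc_poly_eq_poly_rescaled[OF u_nz u_power[of n 1, simplified] T]
    by (simp add: node_output_def Q_def poly_prod)
  have deg: "degree (Q n) \<le> M * T" for n
  proof -
    have "degree (Q n) \<le> (\<Sum>i=1..M. degree (enc_poly_rescaled T (u n) (\<zeta>2 n) (A i) (R i) (S i)))"
      unfolding Q_def by (rule order.trans[OF degree_prod_sum_le]) (simp_all add: o_def)
    also have "\<dots> \<le> (\<Sum>i=1..M. T)"
      by (intro sum_mono degree_enc_poly_rescaled)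
    finally show ?thesis by simp
  qed
  have conv: "(\<lambda>n. coeff (Q n) d) \<longlonglongrightarrow> coeff (\<Prod>i=1..M. monom (R i) T + [:A i + R i:]) d" for d
    unfolding Q_def
    using tendsto_ratio_root_power[OF _ _ pos ratio \<zeta>1]
    by (intro tendsto_coeff_prod tendsto_coeff_enc_poly_rescaled) (auto simp: u_def)
  have "(\<lambda>n. (\<Sum>l\<in>L. w l * poly (Q n) (u n * x l)) / u n ^ (j * T))
          \<longlonglongrightarrow> coeff (\<Prod>i=1..M. monom (R i) T + [:A i + R i:]) (j * T)"
    by (rule tendsto_weighted_samples_coeff[OF dual deg conv u u_nz])
  then show ?thesis
    using j T by (simp add: node u_power coeff_prod_monom_add_const)
qed

definition node_decoder :: "nat \<Rightarrow> nat \<Rightarrow> (nat \<Rightarrow> real) \<Rightarrow> nat \<Rightarrow> real \<Rightarrow> real list \<Rightarrow> real" where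
  "node_decoder N T x j z1 v =
     (\<Sum>l=1..N. coeff (lagrange_basis {1..N} x l) (j * T) * v ! (l - 1)) / z1 ^ j"

lemma tendsto_node_decoder:
  fixes \<zeta>1 \<zeta>2 x :: "nat \<Rightarrow> real"
  assumes T: "T \<ge> 1" and j: "j \<le> M" "j * T < N" and x: "inj_on x {1..N}"
    and pos: "\<And>n. \<zeta>1 n > 0" "\<And>n. \<zeta>2 n > 0"
    and \<zeta>1: "\<zeta>1 \<longlonglongrightarrow> 0"
    and ratio: "T \<ge> 2 \<Longrightarrow> (\<lambda>n. \<zeta>2 n powr (real T / (real T - 1)) / \<zeta>1 n) \<longlonglongrightarrow> 0"
  shows "(\<lambda>n. node_decoder N T x j (\<zeta>1 n) (map (\<lambda>l. node_output M T (\<zeta>1 n) (\<zeta>2 n) A R S (x l)) [1..<N+1]))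
           \<longlonglongrightarrow> mixed_esym {1..M} R (\<lambda>i. A i + R i) j"
proof -
  have dual: "(\<Sum>l=1..N. coeff (lagrange_basis {1..N} x l) (j * T) * x l ^ d) =
               (if d = j * T then 1 else 0)"
    if "d \<le> j * T" for d
    using that j x by (subst sum_coeff_lagrange_basis_mult_power) auto
  have "map (\<lambda>l. node_output M T (\<zeta>1 n) (\<zeta>2 n) A R S (x l)) [1..<N+1] ! (l - 1) =
      node_output M T (\<zeta>1 n) (\<zeta>2 n) A R S (x l)" if "l \<in> {1..N}" for n l
    using that by (auto simp: nth_upt simp del: upt_Suc)
  then have "node_decoder N T x j (\<zeta>1 n) (map (\<lambda>l. node_output M T (\<zeta>1 n) (\<zeta>2 n) A R S (x l)) [1..<N+1]) =
      (\<Sum>l=1..N. coeff (lagrange_basis {1..N} x l) (j * T) * node_output M T (\<zeta>1 n) (\<zeta>2 n) A R S (x l))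
        / \<zeta>1 n ^ j"
    for n by (simp add: node_decoder_def)
  then show ?thesis
    using tendsto_decoded_node_outputs[OF T j(1) pos \<zeta>1 ratio dual] by simp
qed

theorem proposition1:
  fixes M T N :: nat and \<eta> \<sigma>2 :: real and \<zeta>1 \<zeta>2 :: "nat \<Rightarrow> real" and x :: "nat \<Rightarrow> real"
    and k :: nat
  assumes "M \<ge> 1" and "T \<ge> 1" and "\<eta> > 0" and "\<sigma>2 > 0"
    and "\<And>n. \<zeta>1 n > 0" and "\<And>n. \<zeta>2 n > 0"
    and "(\<lambda>n. \<zeta>1 n / \<zeta>2 n) \<longlonglongrightarrow> 0" and "\<zeta>2 \<longlonglongrightarrow> 0"
    and "T \<ge> 2 \<Longrightarrow> (\<lambda>n. \<zeta>2 n powr (real T / (real T - 1)) / \<zeta>1 n) \<longlonglongrightarrow> 0"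
    and "N = (M - 1) * T + 1"
    and "inj_on x {1..N}"
    and "k < M"
  shows "\<exists>f :: nat \<Rightarrow> real list \<Rightarrow> real.
           \<forall>(A :: nat \<Rightarrow> real) (R :: nat \<Rightarrow> real) (S :: nat \<Rightarrow> nat \<Rightarrow> real).
             (\<lambda>n. f n (map (\<lambda>j. node_output M T (\<zeta>1 n) (\<zeta>2 n) A R S (x j)) [1..<N+1]))
               \<longlonglongrightarrow> Dk M \<eta> \<sigma>2 A R k"
proof -
  \<comment> \<open>The hypotheses on \<zeta>1 / \<zeta>2 and \<zeta>2 enter only through \<zeta>1 \<longlonglongrightarrow> 0.\<close>
  have \<zeta>1: "\<zeta>1 \<longlonglongrightarrow> 0"
    using tendsto_mult[OF assms(7,8)] assms(6) by (simp add: less_imp_neq[symmetric])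
  have nodes: "j * T < N" if "j \<le> k" for j
    using that assms(10,12) mult_le_mono1[of j "M - 1" T] by linarith
  define f where "f n v = (\<eta> / (\<sigma>2 + \<eta>)) ^ (M - k) *
      (\<Sum>j\<le>k. (-1) ^ j * real ((M - j) choose (k - j)) * node_decoder N T x j (\<zeta>1 n) v)" for n v
  show ?thesis
  proof (intro exI[of _ f] allI)
    fix A R :: "nat \<Rightarrow> real" and S :: "nat \<Rightarrow> nat \<Rightarrow> real"
    have "(\<lambda>n. f n (map (\<lambda>l. node_output M T (\<zeta>1 n) (\<zeta>2 n) A R S (x l)) [1..<N+1])) \<longlonglongrightarrow>
        (\<eta> / (\<sigma>2 + \<eta>)) ^ (M - k) *
        (\<Sum>j\<le>k. (-1) ^ j * real ((M - j) choose (k - j)) * mixed_esym {1..M} R (\<lambda>i. A i + R i) j)"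
      unfolding f_def using assms(2,5,6,9,11,12) \<zeta>1 nodes
      by (intro tendsto_intros tendsto_node_decoder) auto
    then show "(\<lambda>n. f n (map (\<lambda>l. node_output M T (\<zeta>1 n) (\<zeta>2 n) A R S (x l)) [1..<N+1]))
        \<longlonglongrightarrow> Dk M \<eta> \<sigma>2 A R k"
      using assms(12) by (simp add: Dk_eq_alternating_mixed_esym)
  qed
qed

end
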